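(* In the setting described in the context, for $x,x'\in X_{\mathfrak L_1}$ one has $\psi_0(x)=\psi_0(x')$ if and only if $x_{[l,\infty)}=x'_{[l,\infty)}$ and there is a vertex $v\in V_L$ of $\mathfrak L_1$ with $\pi_1(x)_{[1,L]},\pi_1(x')_{[1,L]}\in B_L(\Lambda_1,v)$ and $\pi_1(x)_{[1,L]}\sim_v\pi_1(x')_{[1,L]}$.
   Context: $\mathbb Z_+=\{0,1,2,\dots\}$, $\mathbb N=\{1,2,\dots\}$. A $\lambda$-graph system $\mathfrak L=(V,E,\lambda,\iota)$ over a finite alphabet $\Sigma$ consists of finite nonempty pairwise disjoint vertex sets $V_l$ ($l\in\mathbb Z_+$); finite pairwise disjoint edge sets $E_{l,l+1}$, each $e\in E_{l,l+1}$ having a source $s(e)\in V_l$ and a terminal $t(e)\in V_{l+1}$; a labeling map $\lambda:E\to\Sigma$; and surjections $\iota:V_{l+1}\to V_l$; such that every vertex is the source of some edge, every vertex in $V_l$ ($l\ge1$) is the terminal of some edge, and (local property) for all $l\ge1$, $u\in V_{l-1}$, $v\in V_{l+1}$ there is a label-preserving bijection between $\{e\in E_{l,l+1}: \iota(s(e))=u,\ t(e)=v\}$ and $\{e\in E_{l-1,l}: s(e)=u,\ t(e)=\iota(v)\}$. Left-resolving: $t(e)=t(f)$, $\lambda(e)=\lambda(f)$ imply $e=f$. $\Omega_{\mathfrak L}=\{(u^l)_{l}\in\prod_l V_l: \iota(u^{l+1})=u^l\}$. $E_{\mathfrak L}$ = set of $(u,\alpha,w)\in\Omega_{\mathfrak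 L}\times\Sigma\times\Omega_{\mathfrak L}$ such that for each $l$ some $e\in E_{l,l+1}$ has $s(e)=u^l$, $t(e)=w^{l+1}$, $\lambda(e)=\alpha$. $X_{\mathfrak L}$ = set of $x=(\alpha_i,u_i)_{i\in\mathbb N}$ in $\Sigma\times\Omega_{\mathfrak L}$ with $(u_i,\alpha_{i+1},u_{i+1})\in E_{\mathfrak L}$ for all $i$ and $(u_0,\alpha_1,u_1)\in E_{\mathfrak L}$ for some $u_0$; relative product topology; $\sigma_{\mathfrak L}$ the left shift. For such $x$: $x_{[k,\infty)}=(\alpha_i,u_i)_{i\ge k}$; $\pi_{\mathfrak L}(x)=(\alpha_i)_{i\in\mathbb N}$, $\pi_{\mathfrak L}(x)_{[1,k]}=(\alpha_1,\dots,\alpha_k)$; $v^l_n(x)$ denotes the $l$-th coordinate $u_n^l$ of $u_n$. $X_\Lambda=\pi_{\mathfrak L}(X_{\mathfrak L})$, $B_k(X_\Lambda)$ its words of length $k$. Setting: $\mathfrak L_1,\mathfrak L_2$ are left-resolving $\lambda$-graph systems; write $\pi_i=\pi_{\mathfrak L_i}$, $\Lambda_i$ for the presented subshifts. $\psi_0:X_{\mathfrak L_1}\to X_{\mathfrak L_2}$ is a continuous surjection with $\sigma_{\mathfrak L_2}\circ\psi_0=\psi_0\circ\sigma_{\mathfrak L_1}$, and $1\le l\le L$ are integers such that (a) $\psi_0(x)=\psi_0(x')$ implies $x_{[l,\infty)}=x'_{[l,\infty)}$; (b) there is a map $\Psi:B_L(X_{\Lambda_1})\to B_l(X_{\Lambda_2})$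 with $\pi_2(\psi_0(x))_{[1,l]}=\Psi(\pi_1(x)_{[1,L]})$ for all $x\in X_{\mathfrak L_1}$. For $v\in V_L$ (vertices of $\mathfrak L_1$), $B_L(\Lambda_1,v)$ is the set of $\mu\in B_L(X_{\Lambda_1})$ such that $\mu=\pi_1(x)_{[1,L]}$ for some $x\in X_{\mathfrak L_1}$ with $v^L_L(x)=v$. For $\mu,\mu'\in B_L(\Lambda_1,v)$, $\mu\sim_v\mu'$ means: there exist $x,x'\in X_{\mathfrak L_1}$ with $\pi_1(x)_{[1,L]}=\mu$, $\pi_1(x')_{[1,L]}=\mu'$, $v^L_L(x)=v^L_L(x')=v$ and $\psi_0(x)=\psi_0(x')$ (this is an equivalence relation on $B_L(\Lambda_1,v)$). *)

theory Defs
  imports "HOL-Analysis.Analysis"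
begin

text \<open>A lambda-graph system: alphabet, vertex sets V_l, edge sets E_{l,l+1} (stored as Ed l),
  source, terminal, label and the maps iota : V_{l+1} -> V_l (a single function on vertices).\<close>
record ('v, 'e, 'a) lgraph =
  Alph :: "'a set"
  Vx   :: "nat \<Rightarrow> 'v set"
  Ed   :: "nat \<Rightarrow> 'e set"
  src  :: "'e \<Rightarrow> 'v"
  trg  :: "'e \<Rightarrow> 'v"
  lab  :: "'e \<Rightarrow> 'a"
  iota :: "'v \<Rightarrow> 'v"

definition lambda_graph_system :: "('v, 'e, 'a) lgraph \<Rightarrow> bool" where
  "lambda_graph_system G \<longleftrightarrow>
     finite (Alph G)
   \<and> (\<forall>l. finite (Vx G l) \<and> Vx G l \<noteq> {})
   \<and> (\<forall>l m. l \<noteq> m \<longrightarrow> Vx G l \<inter> Vx G m = {})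
   \<and> (\<forall>l. finite (Ed G l))
   \<and> (\<forall>l m. l \<noteq> m \<longrightarrow> Ed G l \<inter> Ed G m = {})
   \<and> (\<forall>l. \<forall>e\<in>Ed G l. src G e \<in> Vx G l \<and> trg G e \<in> Vx G (Suc l) \<and> lab G e \<in> Alph G)
   \<and> (\<forall>l. iota G ` Vx G (Suc l) = Vx G l)
   \<and> (\<forall>l. \<forall>v\<in>Vx G l. \<exists>e\<in>Ed G l. src G e = v)
   \<and> (\<forall>l. \<forall>v\<in>Vx G (Suc l). \<exists>e\<in>Ed G l. trg G e = v)
   \<and> (\<forall>l\<ge>1. \<forall>u\<in>Vx G (l - 1). \<forall>v\<in>Vx G (Suc l).
        \<exists>f. bij_betw f {e\<in>Ed G l. iota G (src G e) = u \<and> trg G e = v}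
                       {e\<in>Ed G (l - 1). src G e = u \<and> trg G e = iota G v}
            \<and> (\<forall>e\<in>{e\<in>Ed G l. iota G (src G e) = u \<and> trg G e = v}. lab G (f e) = lab G e))"

definition left_resolving :: "('v, 'e, 'a) lgraph \<Rightarrow> bool" where
  "left_resolving G \<longleftrightarrow>
     (\<forall>l m. \<forall>e\<in>Ed G l. \<forall>f\<in>Ed G m. trg G e = trg G f \<and> lab G e = lab G f \<longrightarrow> e = f)"

definition Omega :: "('v, 'e, 'a) lgraph \<Rightarrow> (nat \<Rightarrow> 'v) set" where
  "Omega G = {u. (\<forall>l. u l \<in> Vx G l) \<and> (\<forall>l. iota G (u (Suc l)) = u l)}"

definition EL :: "('v, 'e, 'a) lgraph \<Rightarrow> ((nat \<Rightarrow> 'v) \<times> 'a \<times> (nat \<Rightarrow> 'v)) set" where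
  "EL G = {(u, \<alpha>, w). u \<in> Omega G \<and> \<alpha> \<in> Alph G \<and> w \<in> Omega G \<and>
             (\<forall>l. \<exists>e\<in>Ed G l. src G e = u l \<and> trg G e = w (Suc l) \<and> lab G e = \<alpha>)}"

text \<open>Points of X_L are encoded 0-based: x i = (alpha_{i+1}, u_{i+1}).\<close>
definition XL :: "('v, 'e, 'a) lgraph \<Rightarrow> (nat \<Rightarrow> 'a \<times> (nat \<Rightarrow> 'v)) set" where
  "XL G = {x. (\<forall>i. (snd (x i), fst (x (Suc i)), snd (x (Suc i))) \<in> EL G)
              \<and> (\<exists>u0. (u0, fst (x 0), snd (x 0)) \<in> EL G)}"

definition XL_top :: "('v, 'e, 'a) lgraph \<Rightarrow> (nat \<Rightarrow> 'a \<times> (nat \<Rightarrow> 'v)) topology" where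
  "XL_top G = subtopology
     (product_topology (\<lambda>_. prod_topology (discrete_topology UNIV)
        (product_topology (\<lambda>_. discrete_topology UNIV) UNIV)) UNIV) (XL G)"

definition shift :: "(nat \<Rightarrow> 'b) \<Rightarrow> nat \<Rightarrow> 'b" where
  "shift x = (\<lambda>i. x (Suc i))"

definition piw :: "(nat \<Rightarrow> 'a \<times> 'u) \<Rightarrow> nat \<Rightarrow> 'a list" where
  "piw x k = map (\<lambda>i. fst (x i)) [0..<k]"

text \<open>x_{[k,infinity)} = x'_{[k,infinity)} (positions k, k+1, ... in 1-based numbering)\<close>
definition tail_eq :: "nat \<Rightarrow> (nat \<Rightarrow> 'b) \<Rightarrow> (nat \<Rightarrow> 'b) \<Rightarrow> bool" where
  "tail_eq k x x' \<longleftrightarrow> (\<forall>i. k \<le> Suc i \<longrightarrow> x i = x' i)"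

text \<open>v^l_n(x) = l-th coordinate of u_n (n \<ge> 1)\<close>
definition vcoord :: "nat \<Rightarrow> nat \<Rightarrow> (nat \<Rightarrow> 'a \<times> (nat \<Rightarrow> 'v)) \<Rightarrow> 'v" where
  "vcoord l n x = snd (x (n - 1)) l"

definition BLv :: "('v, 'e, 'a) lgraph \<Rightarrow> nat \<Rightarrow> 'v \<Rightarrow> 'a list set" where
  "BLv G L v = {\<mu>. \<exists>x\<in>XL G. \<mu> = piw x L \<and> vcoord L L x = v}"

definition simv :: "('v, 'e, 'a) lgraph \<Rightarrow> ((nat \<Rightarrow> 'a \<times> (nat \<Rightarrow> 'v)) \<Rightarrow> 'c)
                     \<Rightarrow> nat \<Rightarrow> 'v \<Rightarrow> 'a list \<Rightarrow> 'a list \<Rightarrow> bool" where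
  "simv G \<psi> L v \<mu> \<mu>' \<longleftrightarrow>
     (\<exists>x\<in>XL G. \<exists>x'\<in>XL G. piw x L = \<mu> \<and> piw x' L = \<mu>' \<and>
        vcoord L L x = v \<and> vcoord L L x' = v \<and> \<psi> x = \<psi> x')"

end

theory Submission
  imports Defs
begin

text \<open>The forward implication only needs that \<open>x\<close> and \<open>x'\<close> share the vertex \<open>v\<^sup>L\<^sub>L\<close>, which
  they do since they agree from position \<open>l \<le> L\<close> on. Conversely, the words \<open>\<sim>\<^sub>v\<close>-related
  witnesses \<open>y, y'\<close> show via \<open>\<Psi>\<close> that \<open>\<psi>\<^sub>0 x\<close> and \<open>\<psi>\<^sub>0 x'\<close> carry the same first \<open>l\<close> labels,
  while shift-equivariance moves the common tail of \<open>x, x'\<close> to a common tail of their images.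
  In a left-resolving system a point is determined by a tail together with the labels in front
  of it (an edge is determined by its terminal and label), so \<open>\<psi>\<^sub>0 x = \<psi>\<^sub>0 x'\<close>.\<close>

lemma XL_snd_in_Omega: "x \<in> XL G \<Longrightarrow> snd (x i) \<in> Omega G"
  by (cases i) (auto simp: XL_def EL_def)

lemma vcoord_in_Vx: "x \<in> XL G \<Longrightarrow> vcoord l n x \<in> Vx G l"
  using XL_snd_in_Omega[of x G "n - 1"] by (simp add: vcoord_def Omega_def)

lemma shift_in_XL: "x \<in> XL G \<Longrightarrow> shift x \<in> XL G"
  unfolding XL_def shift_def by auto

lemma funpow_shift_apply: "(shift ^^ k) x i = x (i + k)"
  by (induction k arbitrary: i) (auto simp: shift_def)

lemma funpow_shift_in_XL: "x \<in> XL G \<Longrightarrow> (shift ^^ k) x \<in> XL G"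
  by (induction k) (auto simp: shift_in_XL)

lemma funpow_shift_commute:
  assumes "\<forall>x\<in>XL G. \<psi> (shift x) = shift (\<psi> x)" "x \<in> XL G"
  shows "\<psi> ((shift ^^ k) x) = (shift ^^ k) (\<psi> x)"
  using assms by (induction k) (auto simp: funpow_shift_in_XL)

lemma tail_eq_iff_funpow_shift: "tail_eq k x x' \<longleftrightarrow> (shift ^^ (k - 1)) x = (shift ^^ (k - 1)) x'"
proof -
  have "(\<forall>i. k \<le> Suc i \<longrightarrow> x i = x' i) \<longleftrightarrow> (\<forall>j. x (j + (k - 1)) = x' (j + (k - 1)))"
  proof safe
    fix i assume "\<forall>j. x (j + (k - 1)) = x' (j + (k - 1))" "k \<le> Suc i"
    thus "x i = x' i" by (drule_tac spec[of _ "i - (k - 1)"]) simp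
  qed simp
  thus ?thesis by (simp add: tail_eq_def fun_eq_iff funpow_shift_apply)
qed

lemma tail_eq_shift_equivariant:
  assumes "\<forall>x\<in>XL G. \<psi> (shift x) = shift (\<psi> x)" "x \<in> XL G" "x' \<in> XL G"
    and "tail_eq k x x'"
  shows "tail_eq k (\<psi> x) (\<psi> x')"
proof -
  have "(shift ^^ (k - 1)) x = (shift ^^ (k - 1)) x'"
    using assms(4) by (simp add: tail_eq_iff_funpow_shift)
  thus ?thesis
    by (simp add: tail_eq_iff_funpow_shift
        flip: funpow_shift_commute[OF assms(1,2)] funpow_shift_commute[OF assms(1,3)])
qed

lemma piw_eq_iff: "piw x k = piw y k \<longleftrightarrow> (\<forall>i<k. fst (x i) = fst (y i))"
  by (auto simp: piw_def)

lemma left_resolving_XL_eq_step: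
  assumes lr: "left_resolving G" and z: "z \<in> XL G" and z': "z' \<in> XL G"
    and next_eq: "z (Suc i) = z' (Suc i)" and lab_eq: "fst (z i) = fst (z' i)"
  shows "z i = z' i"
proof -
  have "snd (z i) m = snd (z' i) m" for m
  proof -
    from z have "(snd (z i), fst (z (Suc i)), snd (z (Suc i))) \<in> EL G" by (auto simp: XL_def)
    then obtain e where e: "e \<in> Ed G m" "src G e = snd (z i) m"
      "trg G e = snd (z (Suc i)) (Suc m)" "lab G e = fst (z (Suc i))"
      unfolding EL_def by blast
    from z' have "(snd (z' i), fst (z' (Suc i)), snd (z' (Suc i))) \<in> EL G" by (auto simp: XL_def)
    then obtain e' where e': "e' \<in> Ed G m" "src G e' = snd (z' i) m"
      "trg G e' = snd (z' (Suc i)) (Suc m)" "lab G e' = fst (z' (Suc i))"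
      unfolding EL_def by blast
    have "e = e'" using lr e e' next_eq unfolding left_resolving_def by metis
    thus ?thesis using e e' by simp
  qed
  thus ?thesis using lab_eq by (simp add: prod_eq_iff fun_eq_iff)
qed

lemma left_resolving_XL_eqI:
  assumes lr: "left_resolving G" and z: "z \<in> XL G" and z': "z' \<in> XL G"
    and tail: "tail_eq (Suc k) z z'" and labels: "piw z k = piw z' k"
  shows "z = z'"
proof -
  have "z i = z' i" if "k - n \<le> i" for n i
    using that
  proof (induction n arbitrary: i)
    case 0
    thus ?case using tail by (simp add: tail_eq_def)
  next
    case (Suc n)
    show ?case
    proof (cases "k - n \<le> i")
      case True
      thus ?thesis using Suc.IH by blast
    next
      case False
      hence "z (Suc i) = z' (Suc i)" "i < k" using Suc.prems Suc.IH by auto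
      thus ?thesis using left_resolving_XL_eq_step[OF lr z z'] labels by (simp add: piw_eq_iff)
    qed
  qed
  from this[of k] show ?thesis by auto
qed

theorem lemma7p5:
  fixes L1 :: "('v, 'e, 'a) lgraph" and L2 :: "('w, 'f, 'b) lgraph"
    and \<psi>0 :: "(nat \<Rightarrow> 'a \<times> (nat \<Rightarrow> 'v)) \<Rightarrow> (nat \<Rightarrow> 'b \<times> (nat \<Rightarrow> 'w))"
    and l L :: nat
  assumes sys1: "lambda_graph_system L1" and lr1: "left_resolving L1"
    and sys2: "lambda_graph_system L2" and lr2: "left_resolving L2"
    and cont: "continuous_map (XL_top L1) (XL_top L2) \<psi>0"
    and onto: "\<psi>0 ` XL L1 = XL L2"
    and comm: "\<forall>x\<in>XL L1. \<psi>0 (shift x) = shift (\<psi>0 x)"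
    and lL: "1 \<le> l" "l \<le> L"
    and a: "\<forall>x\<in>XL L1. \<forall>x'\<in>XL L1. \<psi>0 x = \<psi>0 x' \<longrightarrow> tail_eq l x x'"
    and b: "\<exists>\<Psi>. \<forall>x\<in>XL L1. piw (\<psi>0 x) l = \<Psi> (piw x L)"
    and x: "x \<in> XL L1" and x': "x' \<in> XL L1"
  shows "\<psi>0 x = \<psi>0 x' \<longleftrightarrow>
           tail_eq l x x' \<and>
           (\<exists>v\<in>Vx L1 L. piw x L \<in> BLv L1 L v \<and> piw x' L \<in> BLv L1 L v \<and>
                         simv L1 \<psi>0 L v (piw x L) (piw x' L))"
proof
  assume eq: "\<psi>0 x = \<psi>0 x'"
  have tail: "tail_eq l x x'" using a x x' eq by blast
  define v where "v = vcoord L L x"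
  have v': "vcoord L L x' = v" using tail lL by (simp add: v_def tail_eq_def vcoord_def)
  have "piw x L \<in> BLv L1 L v" using x by (auto simp: BLv_def v_def)
  moreover have "piw x' L \<in> BLv L1 L v" using x' v' by (auto simp: BLv_def)
  moreover have "simv L1 \<psi>0 L v (piw x L) (piw x' L)"
    using x x' v' eq by (auto simp: simv_def v_def)
  ultimately show "tail_eq l x x' \<and> (\<exists>v\<in>Vx L1 L. piw x L \<in> BLv L1 L v \<and> piw x' L \<in> BLv L1 L v \<and>
                         simv L1 \<psi>0 L v (piw x L) (piw x' L))"
    using tail vcoord_in_Vx[OF x] v_def by blast
next
  assume "tail_eq l x x' \<and> (\<exists>v\<in>Vx L1 L. piw x L \<in> BLv L1 L v \<and> piw x' L \<in> BLv L1 L v \<and>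
                         simv L1 \<psi>0 L v (piw x L) (piw x' L))"
  then obtain v where tail: "tail_eq l x x'" and sim: "simv L1 \<psi>0 L v (piw x L) (piw x' L)"
    by blast
  from sim obtain y y' where y: "y \<in> XL L1" "y' \<in> XL L1" "piw y L = piw x L"
    "piw y' L = piw x' L" "\<psi>0 y = \<psi>0 y'" unfolding simv_def by blast
  from b obtain \<Psi> where \<Psi>: "\<forall>x\<in>XL L1. piw (\<psi>0 x) l = \<Psi> (piw x L)" by blast
  have "piw (\<psi>0 x) l = piw (\<psi>0 y) l" using \<Psi> x y(1,3) by simp
  also have "\<dots> = piw (\<psi>0 x') l" using \<Psi> x' y(2,4,5) by simp
  finally have "piw (\<psi>0 x) l = piw (\<psi>0 x') l" .
  hence labels: "piw (\<psi>0 x) (l - 1) = piw (\<psi>0 x') (l - 1)"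
    by (simp add: piw_eq_iff)
  have "tail_eq (Suc (l - 1)) (\<psi>0 x) (\<psi>0 x')"
    using tail_eq_shift_equivariant[OF comm x x' tail] lL by simp
  moreover have "\<psi>0 x \<in> XL L2" "\<psi>0 x' \<in> XL L2" using onto x x' by auto
  ultimately show "\<psi>0 x = \<psi>0 x'" using left_resolving_XL_eqI[OF lr2] labels by blast
qed

end
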